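(* Let $Y$ be a real normed space and let $X\subseteq Y$ be a non-empty compact set which is uniquely remotal with respect to $\mathrm{conv}(X)$. Then $X$ is a singleton.
   Context: A non-empty set $C$ in a normed space $S$ is said to be uniquely remotal with respect to a set $D\subseteq S$ if, for each $y\in D$, there exists a unique $x\in C$ such that $\|x-y\|=\sup_{u\in C}\|u-y\|$. Here $\mathrm{conv}(X)$ denotes the convex hull of $X$. *)

theory Defs
  imports "HOL-Analysis.Analysis"
begin

definition uniquely_remotal :: "'a::real_normed_vector set \<Rightarrow> 'a set \<Rightarrow> bool" where
  "uniquely_remotal C D \<longleftrightarrow> C \<noteq> {} \<and>
     (\<forall>y\<in>D. \<exists>!x. x \<in> C \<and> norm (x - y) = (SUP u\<in>C. norm (u - y)))"

end

theory Submission
  imports Defs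
begin

text \<open>Let \<open>r y\<close> be the distance from \<open>y\<close> to the farthest point of \<open>X\<close>. Being 1-Lipschitz,
  \<open>r\<close> attains a minimum at some \<open>y\<close> on the convex hull of a finite \<open>\<epsilon>\<close>-net \<open>S\<close> of \<open>X\<close>.
  Let \<open>p\<close> be the unique farthest point from \<open>y\<close> and \<open>s \<in> S\<close> with \<open>\<parallel>s - p\<parallel> < \<epsilon>\<close>.
  Moving \<open>y\<close> slightly towards \<open>s\<close> must decrease \<open>r\<close>, contradicting minimality: otherwise
  every farthest point of a moved centre is at distance at least \<open>r y\<close> from \<open>s\<close>, so it lies in
  the compact set \<open>K = {q \<in> X. \<parallel>q - p\<parallel> \<ge> r y - \<parallel>s - p\<parallel>}\<close>, which misses \<open>p\<close> once
  \<open>\<epsilon> \<le> r y\<close>. By uniqueness of \<open>p\<close>, the points of \<open>K\<close> are uniformly closer to \<open>y\<close> than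
  \<open>r y\<close>, and for a small enough move the triangle inequality would push \<open>r\<close> below \<open>r y\<close>.
  If \<open>X\<close> has two points \<open>a \<noteq> b\<close>, then \<open>r \<ge> \<parallel>a - b\<parallel> / 2\<close> everywhere, which is the
  choice of \<open>\<epsilon>\<close>.\<close>

definition farthest_dist :: "'a::real_normed_vector set \<Rightarrow> 'a \<Rightarrow> real" where
  "farthest_dist X y = (SUP u\<in>X. norm (u - y))"

lemma bdd_above_norm_diff_image:
  "bounded X \<Longrightarrow> bdd_above ((\<lambda>u. norm (u - y)) ` X)"
  by (metis bounded_imp_bdd_above bounded_norm_comp bounded_translation_minus)

lemma norm_diff_le_farthest_dist:
  "bounded X \<Longrightarrow> u \<in> X \<Longrightarrow> norm (u - y) \<le> farthest_dist X y"
  unfolding farthest_dist_def by (rule cSUP_upper[OF _ bdd_above_norm_diff_image])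

lemma farthest_dist_le_add_norm:
  assumes "X \<noteq> {}" "bounded X"
  shows "farthest_dist X z \<le> farthest_dist X y + norm (y - z)"
  unfolding farthest_dist_def
proof (rule cSUP_least[OF assms(1)])
  fix u assume "u \<in> X"
  have "norm (u - z) \<le> norm (u - y) + norm (y - z)"
    using norm_triangle_ineq[of "u - y" "y - z"] by simp
  also have "\<dots> \<le> (SUP u\<in>X. norm (u - y)) + norm (y - z)"
    using norm_diff_le_farthest_dist[OF assms(2) \<open>u \<in> X\<close>] by (simp add: farthest_dist_def)
  finally show "norm (u - z) \<le> (SUP u\<in>X. norm (u - y)) + norm (y - z)" .
qed

lemma lipschitz_on_farthest_dist:
  assumes "X \<noteq> {}" "bounded X"
  shows "1-lipschitz_on A (farthest_dist X)"
proof (rule lipschitz_onI)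
  fix y z
  show "dist (farthest_dist X y) (farthest_dist X z) \<le> 1 * dist y z"
    using farthest_dist_le_add_norm[OF assms, of y z] farthest_dist_le_add_norm[OF assms, of z y]
    by (simp add: dist_real_def dist_norm norm_minus_commute abs_le_iff)
qed simp

lemma continuous_on_farthest_dist:
  "X \<noteq> {} \<Longrightarrow> bounded X \<Longrightarrow> continuous_on A (farthest_dist X)"
  using lipschitz_on_continuous_on lipschitz_on_farthest_dist by blast

lemma compact_farthest_point_exists:
  assumes "compact X" "X \<noteq> {}"
  obtains x where "x \<in> X" "norm (x - y) = farthest_dist X y"
proof -
  have "continuous_on X (\<lambda>u. norm (u - y))"
    by (intro continuous_intros)
  then obtain x where x: "x \<in> X" "\<And>u. u \<in> X \<Longrightarrow> norm (u - y) \<le> norm (x - y)"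
    using continuous_attains_sup[OF assms] by blast
  then have "farthest_dist X y = norm (x - y)"
    unfolding farthest_dist_def by (auto intro!: cSup_eq_maximum)
  with x that show ?thesis by simp
qed

lemma norm_diff_le_two_farthest_dist:
  assumes "bounded X" "a \<in> X" "b \<in> X"
  shows "norm (a - b) \<le> 2 * farthest_dist X y"
  using norm_triangle_ineq4[of "a - y" "b - y"]
    norm_diff_le_farthest_dist[OF assms(1,2), of y] norm_diff_le_farthest_dist[OF assms(1,3), of y]
  by simp

lemma norm_diff_convex_comb_le:
  fixes q y s :: "'a::real_normed_vector"
  assumes "0 \<le> t" "t \<le> 1" "norm (q - y) \<le> m" "norm (q - s) \<le> M"
  shows "norm (q - ((1 - t) *\<^sub>R y + t *\<^sub>R s)) \<le> (1 - t) * m + t * M"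
proof -
  have "q - ((1 - t) *\<^sub>R y + t *\<^sub>R s) = (1 - t) *\<^sub>R (q - y) + t *\<^sub>R (q - s)"
    by (simp add: algebra_simps)
  then have "norm (q - ((1 - t) *\<^sub>R y + t *\<^sub>R s)) \<le> (1 - t) * norm (q - y) + t * norm (q - s)"
    using norm_triangle_ineq[of "(1 - t) *\<^sub>R (q - y)" "t *\<^sub>R (q - s)"] assms(1,2) by simp
  also have "\<dots> \<le> (1 - t) * m + t * M"
    using assms by (intro add_mono mult_left_mono) auto
  finally show ?thesis .
qed

lemma far_from_convex_comb_imp_far_from_endpoint:
  fixes q y s :: "'a::real_normed_vector"
  assumes "0 < t" "t \<le> 1" "norm (q - y) \<le> R" "R \<le> norm (q - ((1 - t) *\<^sub>R y + t *\<^sub>R s))"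
  shows "R \<le> norm (q - s)"
proof -
  have "R \<le> (1 - t) * R + t * norm (q - s)"
    using assms norm_diff_convex_comb_le[of t q y R s "norm (q - s)"] by linarith
  then have "t * R \<le> t * norm (q - s)" by (simp add: algebra_simps)
  with \<open>0 < t\<close> show ?thesis by simp
qed

lemma far_from_convex_comb_imp_far_from_near_point:
  assumes "bounded X" "0 < t" "t \<le> 1" "q \<in> X"
    and "farthest_dist X y \<le> norm (q - ((1 - t) *\<^sub>R y + t *\<^sub>R s))"
  shows "farthest_dist X y - norm (s - p) \<le> norm (q - p)"
proof -
  have "farthest_dist X y \<le> norm (q - s)"
    using far_from_convex_comb_imp_far_from_endpoint[OF assms(2,3)] assms(5)
      norm_diff_le_farthest_dist[OF assms(1,4)] by blast
  then show ?thesis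
    using norm_triangle_ineq[of "q - p" "p - s"] by (simp add: norm_minus_commute)
qed

lemma convex_comb_lt_for_small_weight:
  fixes m M R :: real
  assumes "m < R"
  obtains t where "0 < t" "t \<le> 1" "(1 - t) * m + t * M < R"
proof -
  have "((\<lambda>t. (1 - t) * m + t * M) \<longlongrightarrow> m) (at_right 0)"
    by (auto intro!: tendsto_eq_intros)
  then have "\<forall>\<^sub>F t in at_right 0. (1 - t) * m + t * M < R"
    using assms by (rule order_tendstoD)
  moreover have "\<forall>\<^sub>F t in at_right (0::real). 0 < t \<and> t \<le> 1"
    by (auto simp: eventually_at_right_field intro: exI[of _ 1])
  ultimately have "\<forall>\<^sub>F t in at_right 0. 0 < t \<and> t \<le> 1 \<and> (1 - t) * m + t * M < R"
    by eventually_elim simp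
  with that show ?thesis
    using eventually_happens'[OF trivial_limit_at_right_real] by blast
qed

lemma unique_farthest_point_imp_descent:
  fixes X :: "'a::real_normed_vector set"
  assumes "compact X" and p: "p \<in> X" "norm (p - y) = farthest_dist X y"
    and p_unique: "\<forall>x\<in>X. norm (x - y) = farthest_dist X y \<longrightarrow> x = p"
    and s_near_p: "norm (s - p) < farthest_dist X y"
  obtains t where "0 < t" "t \<le> 1"
    "farthest_dist X ((1 - t) *\<^sub>R y + t *\<^sub>R s) < farthest_dist X y"
proof (rule ccontr)
  assume no_descent: "\<not> thesis"
  note descent = that
  define R where "R = farthest_dist X y"
  define c where "c t = (1 - t) *\<^sub>R y + t *\<^sub>R s" for t
  have R_le: "R \<le> farthest_dist X (c t)" if "0 < t" "t \<le> 1" for t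
    using descent[OF that] no_descent unfolding R_def c_def by force
  have "bounded X" "X \<noteq> {}"
    using \<open>compact X\<close> p(1) by (auto intro: compact_imp_bounded)
  define K where "K = X \<inter> {q. R - norm (s - p) \<le> norm (q - p)}"
  have far_in_K: "q \<in> K"
    if t: "0 < t" "t \<le> 1" and q: "q \<in> X" "norm (q - c t) = farthest_dist X (c t)" for t q
    using far_from_convex_comb_imp_far_from_near_point[OF \<open>bounded X\<close> t q(1), of y s p]
      R_le[OF t] q unfolding K_def R_def c_def by simp
  have "compact K"
    unfolding K_def by (intro compact_Int_closed \<open>compact X\<close> closed_Collect_le continuous_intros)
  obtain q1 where "q1 \<in> X" "norm (q1 - c 1) = farthest_dist X (c 1)"
    using compact_farthest_point_exists[OF \<open>compact X\<close> \<open>X \<noteq> {}\<close>] by blast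
  then have "K \<noteq> {}"
    using far_in_K[of 1 q1] by auto
  moreover have "continuous_on K (\<lambda>q. norm (q - y))"
    by (intro continuous_intros)
  ultimately obtain k where k: "k \<in> K" and k_max: "\<And>q. q \<in> K \<Longrightarrow> norm (q - y) \<le> norm (k - y)"
    using continuous_attains_sup[OF \<open>compact K\<close>] by blast
  define m where "m = norm (k - y)"
  have "k \<noteq> p"
    using k s_near_p by (auto simp: K_def R_def)
  then have "m < R"
    using k p_unique norm_diff_le_farthest_dist[OF \<open>bounded X\<close>, of k y]
    by (force simp: K_def m_def R_def)
  then obtain t where t: "0 < t" "t \<le> 1" and small: "(1 - t) * m + t * (R + norm (y - s)) < R"
    by (rule convex_comb_lt_for_small_weight)
  obtain q where q: "q \<in> X" "norm (q - c t) = farthest_dist X (c t)"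
    using compact_farthest_point_exists[OF \<open>compact X\<close> \<open>X \<noteq> {}\<close>] by blast
  have "norm (q - y) \<le> m"
    using k_max[OF far_in_K[OF t q]] by (simp add: m_def)
  moreover have "norm (q - s) \<le> R + norm (y - s)"
    using norm_triangle_ineq[of "q - y" "y - s"] norm_diff_le_farthest_dist[OF \<open>bounded X\<close> q(1), of y]
    by (simp add: R_def)
  ultimately have "norm (q - c t) \<le> (1 - t) * m + t * (R + norm (y - s))"
    unfolding c_def using t by (intro norm_diff_convex_comb_le) auto
  then show False
    using R_le[OF t] q(2) small by linarith
qed

theorem theorem1p1:
  fixes X :: "'a::real_normed_vector set"
  assumes "X \<noteq> {}" and "compact X"
    and "uniquely_remotal X (convex hull X)"
  shows "\<exists>x. X = {x}"
proof (rule ccontr)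
  assume "\<nexists>x. X = {x}"
  then obtain a b where ab: "a \<in> X" "b \<in> X" "a \<noteq> b"
    using assms(1) by blast
  have "bounded X"
    using assms(2) by (rule compact_imp_bounded)
  define \<epsilon> where "\<epsilon> = norm (a - b) / 2"
  have "\<epsilon> > 0"
    using ab by (simp add: \<epsilon>_def)
  then obtain S where S: "S \<subseteq> X" "finite S" "X \<subseteq> (\<Union>c\<in>S. ball c \<epsilon>)"
    using compactE_image[OF assms(2), of X "\<lambda>c. ball c \<epsilon>"] by force
  obtain y where y: "y \<in> convex hull S"
    and y_min: "\<And>z. z \<in> convex hull S \<Longrightarrow> farthest_dist X y \<le> farthest_dist X z"
    using continuous_attains_inf[OF finite_imp_compact_convex_hull[OF S(2)] _
        continuous_on_farthest_dist[OF assms(1) \<open>bounded X\<close>]] S(3) assms(1) by auto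
  have "y \<in> convex hull X"
    using y hull_mono[OF S(1)] by blast
  then obtain p where p: "p \<in> X" "norm (p - y) = farthest_dist X y"
    and p_unique: "\<forall>x\<in>X. norm (x - y) = farthest_dist X y \<longrightarrow> x = p"
    using assms(3) unfolding uniquely_remotal_def farthest_dist_def[symmetric] by metis
  obtain s where s: "s \<in> S" "dist s p < \<epsilon>"
    using S(3) p(1) by (auto simp: dist_commute)
  have "norm (s - p) < farthest_dist X y"
    using s(2) norm_diff_le_two_farthest_dist[OF \<open>bounded X\<close> ab(1,2), of y]
    by (simp add: \<epsilon>_def dist_norm)
  then obtain t where "0 < t" "t \<le> 1"
    and descent: "farthest_dist X ((1 - t) *\<^sub>R y + t *\<^sub>R s) < farthest_dist X y"
    by (rule unique_farthest_point_imp_descent[OF assms(2) p p_unique])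
  then have "(1 - t) *\<^sub>R y + t *\<^sub>R s \<in> convex hull S"
    using convexD[OF convex_convex_hull y hull_inc[OF s(1)]] by simp
  with descent y_min show False
    by fastforce
qed

end
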